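(* Let $p\ge1$, $\hat p:=\min(p,2)$, and let $\mathscr N$ be a semi-norm on $\mathbb R^n$ that is $\hat p$-uniformly smooth with constant $S$. Let $\mu$ be the probability measure on $\ker(\mathscr N)^\perp$ with density proportional to $e^{-\mathscr N(x)^{\hat p}}$. Then for every semi-norm $\hat N$ on $\mathbb R^n$ with $\ker(\mathscr N)\subseteq\ker(\hat N)$, $\max_{x\in B_{\mathscr N}}\hat N(x)\le 12S\int\hat N(x)\,d\mu(x).$
   Context: $\ker(N):=\{x:N(x)=0\}$; $B_{\mathscr N}:=\{x:\mathscr N(x)\le1\}$. A semi-norm $\mathscr N$ is $q$-uniformly smooth with constant $S$ if $\frac{\mathscr N(x+y)^q+\mathscr N(x-y)^q}{2}\le\mathscr N(x)^q+\mathscr N(Sy)^q$ for all $x,y$. *)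

theory Defs
  imports "HOL-Analysis.Analysis"
begin

definition seminorm :: "('a::real_vector \<Rightarrow> real) \<Rightarrow> bool" where
  "seminorm N \<longleftrightarrow> (\<forall>x. 0 \<le> N x) \<and> (\<forall>c x. N (c *\<^sub>R x) = \<bar>c\<bar> * N x)
     \<and> (\<forall>x y. N (x + y) \<le> N x + N y)"

definition ker_sn :: "('a::real_vector \<Rightarrow> real) \<Rightarrow> 'a set" where
  "ker_sn N = {x. N x = 0}"

definition unit_ball_sn :: "('a::real_vector \<Rightarrow> real) \<Rightarrow> 'a set" where
  "unit_ball_sn N = {x. N x \<le> 1}"

definition uniformly_smooth :: "real \<Rightarrow> real \<Rightarrow> ('a::real_vector \<Rightarrow> real) \<Rightarrow> bool" where
  "uniformly_smooth q S N \<longleftrightarrow>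
     (\<forall>x y. (N (x + y) powr q + N (x - y) powr q) / 2 \<le> N x powr q + N (S *\<^sub>R y) powr q)"

definition orth_comp :: "'a::real_inner set \<Rightarrow> 'a set" where
  "orth_comp V = {x. \<forall>y\<in>V. inner x y = 0}"

text \<open>Lebesgue measure on the subspace range L, transported by a linear bijection
  L onto that subspace (determined up to a positive scalar factor), and the probability
  measure on range L with density proportional to exp(-N(x) powr q) w.r.t. it.\<close>
definition subspace_leb :: "('m::euclidean_space \<Rightarrow> 'n::euclidean_space) \<Rightarrow> 'n measure" where
  "subspace_leb L = distr lborel borel L"

definition exp_density_measure ::
  "('m::euclidean_space \<Rightarrow> 'n::euclidean_space) \<Rightarrow> real \<Rightarrow> ('n \<Rightarrow> real) \<Rightarrow> 'n measure" where
  "exp_density_measure L q N =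
     (let Z = integral\<^sup>L (subspace_leb L) (\<lambda>x. exp (- (N x powr q)))
      in density (subspace_leb L) (\<lambda>x. ennreal (exp (- (N x powr q)) / Z)))"

end

theory Submission
  imports Defs "HOL-Probability.Distributions"
begin

(* Pull back along L: on the parameter space M = N o L is a norm, so the weight g = exp (- M^q)
   and H * g, with H = Nhat o L, are integrable.  For M y <= 1 put v = y / S.  Uniform smoothness
   and convexity of exp give g x <= e (g (x + v) + g (x - v)) / 2.  Both translates x + v and x - v
   leave the sublevel set A = {H < H v / 2}, so by translation invariance of Lebesgue measure the
   g-mass of A is at most e times that of its complement, where H >= H v / 2.  Markov's inequality
   then yields H y = S H v <= 2 (1 + e) S * (g-average of H), and 2 (1 + e) <= 12.  Every x with
   N x <= 1 has a representative L y with the same values of N and Nhat, since both vanish on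
   ker N. *)

lemma seminorm_nonneg: "seminorm N \<Longrightarrow> 0 \<le> N x"
  unfolding seminorm_def by blast

lemma seminorm_scaleR: "seminorm N \<Longrightarrow> N (c *\<^sub>R x) = \<bar>c\<bar> * N x"
  unfolding seminorm_def by blast

lemma seminorm_triangle: "seminorm N \<Longrightarrow> N (x + y) \<le> N x + N y"
  unfolding seminorm_def by blast

lemma seminorm_zero: "seminorm N \<Longrightarrow> N 0 = 0"
  using seminorm_scaleR[of N 0 0] by simp

lemma seminorm_minus: "seminorm N \<Longrightarrow> N (- x) = N x"
  using seminorm_scaleR[of N "-1" x] by simp

lemma seminorm_diff_le: "seminorm N \<Longrightarrow> N (x - y) \<le> N x + N y"
  using seminorm_triangle[of N x "- y"] seminorm_minus[of N y] by simp

lemma seminorm_reverse_triangle: "seminorm N \<Longrightarrow> N x - N y \<le> N (x - y)"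
  using seminorm_triangle[of N "x - y" y] by simp

lemma seminorm_add_ker:
  assumes "seminorm N" "N y = 0"
  shows "N (x + y) = N x"
  using seminorm_triangle[OF assms(1), of x y] seminorm_diff_le[OF assms(1), of "x + y" y] assms(2)
  by simp

lemma seminorm_sum_le: "seminorm N \<Longrightarrow> N (sum f A) \<le> (\<Sum>a\<in>A. N (f a))"
proof (induction A rule: infinite_finite_induct)
  case (insert a A)
  then show ?case using seminorm_triangle[of N "f a" "sum f A"] by simp
qed (simp_all add: seminorm_zero)

lemma seminorm_comp_linear:
  assumes "seminorm N" "linear L"
  shows "seminorm (\<lambda>y. N (L y))"
  using assms unfolding seminorm_def by (simp add: linear_add linear_scale)

lemma uniformly_smooth_comp_linear:
  assumes "uniformly_smooth q S N" "linear L"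
  shows "uniformly_smooth q S (\<lambda>y. N (L y))"
  using assms unfolding uniformly_smooth_def by (simp add: linear_add linear_diff linear_scale)

lemma subspace_ker_sn:
  assumes "seminorm N"
  shows "subspace (ker_sn N)"
  unfolding subspace_def ker_sn_def
  using seminorm_zero[OF assms] seminorm_scaleR[OF assms] seminorm_add_ker[OF assms] by auto

lemma seminorm_le_norm:
  fixes N :: "'a::euclidean_space \<Rightarrow> real"
  assumes "seminorm N"
  shows "\<exists>C\<ge>0. \<forall>x. N x \<le> C * norm x"
proof (intro exI[of _ "\<Sum>b\<in>Basis. N b"] conjI allI)
  show "0 \<le> (\<Sum>b\<in>Basis. N b)" by (simp add: sum_nonneg seminorm_nonneg[OF assms])
  fix x :: 'a
  have "N x = N (\<Sum>b\<in>Basis. (x \<bullet> b) *\<^sub>R b)" by (simp add: euclidean_representation)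
  also have "\<dots> \<le> (\<Sum>b\<in>Basis. N ((x \<bullet> b) *\<^sub>R b))" by (rule seminorm_sum_le[OF assms])
  also have "\<dots> = (\<Sum>b\<in>Basis. \<bar>x \<bullet> b\<bar> * N b)" by (simp add: seminorm_scaleR[OF assms])
  also have "\<dots> \<le> (\<Sum>b\<in>Basis. norm x * N b)"
    by (intro sum_mono mult_right_mono Basis_le_norm seminorm_nonneg[OF assms])
  finally show "N x \<le> (\<Sum>b\<in>Basis. N b) * norm x" by (simp add: sum_distrib_left mult.commute)
qed

lemma continuous_on_seminorm:
  fixes N :: "'a::euclidean_space \<Rightarrow> real"
  assumes "seminorm N"
  shows "continuous_on S N"
proof -
  obtain C where C: "C \<ge> 0" "\<And>x. N x \<le> C * norm x" using seminorm_le_norm[OF assms] by blast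
  have "\<bar>N x - N y\<bar> \<le> C * dist x y" for x y
    using seminorm_reverse_triangle[OF assms, of x y] seminorm_reverse_triangle[OF assms, of y x]
      C(2)[of "x - y"] C(2)[of "y - x"] by (simp add: dist_norm norm_minus_commute)
  then have "C-lipschitz_on S N" by (intro lipschitz_onI C(1)) (simp add: dist_real_def)
  then show ?thesis by (rule lipschitz_on_continuous_on)
qed

lemma borel_measurable_seminorm:
  fixes N :: "'a::euclidean_space \<Rightarrow> real"
  assumes "seminorm N"
  shows "N \<in> borel_measurable borel"
  by (rule borel_measurable_continuous_onI[OF continuous_on_seminorm[OF assms]])

lemma seminorm_ge_norm:
  fixes M :: "'a::euclidean_space \<Rightarrow> real"
  assumes "seminorm M" and definite: "\<And>x. M x = 0 \<Longrightarrow> x = 0"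
  shows "\<exists>c>0. \<forall>x. c * norm x \<le> M x"
proof -
  obtain b :: 'a where "b \<in> Basis" using nonempty_Basis by blast
  then have "sphere (0::'a) 1 \<noteq> {}" by (auto intro!: exI[of _ b])
  then obtain z where "z \<in> sphere 0 1" "\<And>y. y \<in> sphere 0 1 \<Longrightarrow> M z \<le> M y"
    using continuous_attains_inf[OF compact_sphere _ continuous_on_seminorm[OF assms(1)]] by metis
  then have z: "norm z = 1" "\<And>y. norm y = 1 \<Longrightarrow> M z \<le> M y" by auto
  have "M z > 0"
    using definite[of z] z(1) seminorm_nonneg[OF assms(1), of z] by (cases "M z = 0") auto
  moreover have "M z * norm x \<le> M x" for x
  proof (cases "x = 0")
    case False
    then have "M z \<le> M ((1 / norm x) *\<^sub>R x)" by (intro z(2)) auto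
    then show ?thesis using False by (simp add: seminorm_scaleR[OF assms(1)] field_simps)
  qed (simp add: seminorm_zero[OF assms(1)])
  ultimately show ?thesis by blast
qed

lemma exp_neg_midpoint_le: "exp (- ((a + b) / 2)) \<le> (exp (- a) + exp (- b)) / (2::real)"
proof -
  have "(1 - 1/2) *\<^sub>R (- a) + (1/2) *\<^sub>R (- b) = - ((a + b) / 2)"
    by (simp add: add_divide_distrib)
  then show ?thesis using convex_onD[OF exp_convex, of "1/2" "- a" "- b"] by simp
qed

lemma exp_neg_le_midpoint:
  fixes a b c :: real
  assumes "(a + b) / 2 \<le> c + 1"
  shows "exp (- c) \<le> exp 1 * ((exp (- a) + exp (- b)) / 2)"
proof -
  have "- c \<le> 1 + - ((a + b) / 2)" using assms by linarith
  then have "exp (- c) \<le> exp (1 + - ((a + b) / 2))" by simp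
  also have "\<dots> \<le> exp 1 * ((exp (- a) + exp (- b)) / 2)"
    unfolding exp_add by (intro mult_left_mono exp_neg_midpoint_le) simp_all
  finally show ?thesis .
qed

lemma nn_integral_exp_neg_abs_finite:
  fixes a :: real
  assumes "a > 0"
  shows "(\<integral>\<^sup>+x. ennreal (exp (- a * \<bar>x\<bar>)) \<partial>lborel) < \<infinity>"
proof -
  let ?f = "\<lambda>x::real. ennreal (exp (- x)) * indicator {0..} x"
  have half_line: "(\<integral>\<^sup>+x. ?f x \<partial>lborel) = 1"
    using nn_intergal_power_times_exp_Ici[of 0] by simp
  then have "(\<integral>\<^sup>+x. ?f (- x) \<partial>lborel) = 1"
    using nn_integral_real_affine[of ?f "-1" 0] by simp
  then have unit_rate: "(\<integral>\<^sup>+x. ennreal (exp (- \<bar>x\<bar>)) \<partial>lborel) \<le> 2"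
    using half_line nn_integral_mono[of lborel "\<lambda>x. ennreal (exp (- \<bar>x\<bar>))" "\<lambda>x. ?f x + ?f (- x)"]
    by (auto simp: nn_integral_add split: split_indicator)
  have "(\<integral>\<^sup>+x. ennreal (exp (- a * \<bar>x\<bar>)) \<partial>lborel)
      = \<bar>1/a\<bar> * (\<integral>\<^sup>+x. ennreal (exp (- a * \<bar>0 + (1/a) * x\<bar>)) \<partial>lborel)"
    using assms by (intro nn_integral_real_affine) auto
  also have "(\<lambda>x. ennreal (exp (- a * \<bar>0 + (1/a) * x\<bar>))) = (\<lambda>x. ennreal (exp (- \<bar>x\<bar>)))"
    using assms by (auto simp: abs_mult)
  also have "ennreal \<bar>1/a\<bar> * (\<integral>\<^sup>+x. ennreal (exp (- \<bar>x\<bar>)) \<partial>lborel) \<le> ennreal \<bar>1/a\<bar> * 2"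
    using unit_rate by (rule mult_left_mono) simp
  also have "\<dots> < \<infinity>" by (simp add: ennreal_mult_less_top)
  finally show ?thesis .
qed

lemma integrable_exp_neg_norm:
  assumes "d > 0"
  shows "integrable lborel (\<lambda>y::'a::euclidean_space. exp (- d * norm y))"
proof -
  define a where "a = d / DIM('a)"
  have a: "a > 0" using assms by (simp add: a_def)
  have product_bound: "exp (- d * norm y) \<le> (\<Prod>b\<in>Basis. exp (- a * \<bar>y \<bullet> b\<bar>))" for y :: 'a
  proof -
    have "(\<Sum>b\<in>(Basis::'a set). a * \<bar>y \<bullet> b\<bar>) \<le> (\<Sum>b\<in>(Basis::'a set). a * norm y)"
      using a by (intro sum_mono mult_left_mono Basis_le_norm) auto
    then have "- d * norm y \<le> - (\<Sum>b\<in>(Basis::'a set). a * \<bar>y \<bullet> b\<bar>)" by (simp add: a_def)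
    then show ?thesis by (simp add: exp_sum[symmetric] sum_negf)
  qed
  have "(\<integral>\<^sup>+y. ennreal (norm (exp (- d * norm y))) \<partial>(lborel::'a measure))
        \<le> (\<integral>\<^sup>+y. (\<Prod>b\<in>Basis. ennreal (exp (- a * \<bar>y \<bullet> b\<bar>))) \<partial>(lborel::'a measure))"
  proof (intro nn_integral_mono)
    fix y :: 'a
    have "ennreal (norm (exp (- d * norm y))) \<le> ennreal (\<Prod>b\<in>Basis. exp (- a * \<bar>y \<bullet> b\<bar>))"
      using product_bound[of y] by (intro ennreal_leI) simp
    then show "ennreal (norm (exp (- d * norm y))) \<le> (\<Prod>b\<in>Basis. ennreal (exp (- a * \<bar>y \<bullet> b\<bar>)))"
      by (simp add: prod_ennreal)
  qed
  also have "\<dots> = (\<Prod>b\<in>(Basis::'a set). (\<integral>\<^sup>+x. ennreal (exp (- a * \<bar>x\<bar>)) \<partial>lborel))"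
    by (rule nn_integral_lborel_prod) auto
  also have "\<dots> < \<infinity>"
    using nn_integral_exp_neg_abs_finite[OF a] by (simp add: less_top[symmetric] power_eq_top_ennreal)
  finally show ?thesis by (subst integrable_iff_bounded) auto
qed

lemma exp_neg_powr_le:
  fixes s t q :: real
  assumes "0 \<le> s" "s \<le> t" "1 \<le> q"
  shows "exp (- (t powr q)) \<le> exp 1 * exp (- s)"
proof -
  have "t - 1 \<le> t powr q"
  proof (cases "t \<ge> 1")
    case True
    then have "t powr 1 \<le> t powr q" using assms by (intro powr_mono) auto
    then show ?thesis using True by simp
  next
    case False
    then show ?thesis using powr_ge_zero[of t q] by linarith
  qed
  then show ?thesis using assms(2) by (simp add: exp_add[symmetric])
qed

lemma mult_exp_neg_le:
  fixes t :: real
  assumes "0 \<le> t"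
  shows "t * exp (- t) \<le> 2 * exp (- (t / 2))"
proof -
  have "t \<le> 2 * exp (t / 2)" using exp_ge_add_one_self[of "t / 2"] assms by linarith
  then have "t * exp (- t) \<le> 2 * exp (t / 2) * exp (- t)" by (intro mult_right_mono) auto
  also have "\<dots> = 2 * exp (- (t / 2))" by (simp add: exp_add[symmetric])
  finally show ?thesis .
qed

lemma
  fixes M H :: "'a::euclidean_space \<Rightarrow> real"
  assumes sM: "seminorm M" and definite: "\<And>x. M x = 0 \<Longrightarrow> x = 0"
    and sH: "seminorm H" and q: "1 \<le> q"
  shows integrable_exp_neg_seminorm_powr: "integrable lborel (\<lambda>x. exp (- (M x powr q)))"
    and integrable_seminorm_mult_exp_neg_seminorm_powr:
      "integrable lborel (\<lambda>x. H x * exp (- (M x powr q)))"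
proof -
  note [measurable] = borel_measurable_seminorm[OF sM] borel_measurable_seminorm[OF sH]
  obtain c where c: "c > 0" "\<And>x. c * norm x \<le> M x" using seminorm_ge_norm[OF sM definite] by blast
  obtain C where C: "C \<ge> 0" "\<And>x. H x \<le> C * norm x" using seminorm_le_norm[OF sH] by blast
  have weight_le: "exp (- (M x powr q)) \<le> exp 1 * exp (- c * norm x)" for x
    using exp_neg_powr_le[OF _ c(2) q] c(1) by simp
  show "integrable lborel (\<lambda>x. exp (- (M x powr q)))"
  proof (rule Bochner_Integration.integrable_bound)
    show "integrable lborel (\<lambda>x. exp 1 * exp (- c * norm x))"
      using c(1) by (intro integrable_mult_right integrable_exp_neg_norm)
  qed (use weight_le in auto)
  have H_weight_le: "H x * exp (- (M x powr q)) \<le> C * exp 1 * (2 / c) * exp (- (c / 2) * norm x)" for x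
  proof -
    have "H x * exp (- (M x powr q)) \<le> (C * norm x) * (exp 1 * exp (- c * norm x))"
      using C(2)[of x] weight_le[of x] seminorm_nonneg[OF sH, of x] by (intro mult_mono) auto
    also have "\<dots> = (C * exp 1 / c) * ((c * norm x) * exp (- (c * norm x)))" using c(1) by simp
    also have "\<dots> \<le> (C * exp 1 / c) * (2 * exp (- ((c * norm x) / 2)))"
      using C(1) c(1) by (intro mult_left_mono mult_exp_neg_le) auto
    finally show ?thesis by simp
  qed
  show "integrable lborel (\<lambda>x. H x * exp (- (M x powr q)))"
  proof (rule Bochner_Integration.integrable_bound)
    show "integrable lborel (\<lambda>x. C * exp 1 * (2 / c) * exp (- (c / 2) * norm x))"
      using c(1) by (intro integrable_mult_right integrable_exp_neg_norm) simp
    show "AE x in lborel. norm (H x * exp (- (M x powr q)))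
        \<le> norm (C * exp 1 * (2 / c) * exp (- (c / 2) * norm x))"
    proof (rule AE_I2)
      fix x
      have "norm (H x * exp (- (M x powr q))) = H x * exp (- (M x powr q))"
        using seminorm_nonneg[OF sH, of x] by simp
      also have "\<dots> \<le> norm (C * exp 1 * (2 / c) * exp (- (c / 2) * norm x))"
        unfolding real_norm_def by (rule order_trans[OF H_weight_le abs_ge_self])
      finally show "norm (H x * exp (- (M x powr q))) \<le> norm (C * exp 1 * (2 / c) * exp (- (c / 2) * norm x))" .
    qed
  qed simp
qed

lemma integral_pos_lborel:
  fixes f :: "'a::euclidean_space \<Rightarrow> real"
  assumes "integrable lborel f" "\<And>x. 0 < f x"
  shows "0 < integral\<^sup>L lborel f"
proof -
  have "integral\<^sup>L lborel f \<noteq> 0"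
  proof
    assume "integral\<^sup>L lborel f = 0"
    then have "AE x in lborel. f x = 0"
      using integral_nonneg_eq_0_iff_AE[OF assms(1)] assms(2) by (simp add: less_imp_le)
    then have "AE x in (lborel::'a measure). False" using assms(2) by (simp add: less_imp_neq[symmetric])
    then obtain Z :: "'a set" where "UNIV \<subseteq> Z" "emeasure lborel Z = 0"
      by (auto elim: AE_E)
    then show False by (simp add: top.extremum_unique)
  qed
  moreover have "0 \<le> integral\<^sup>L lborel f"
    using assms(2) by (intro integral_nonneg_AE AE_I2) (simp add: less_imp_le)
  ultimately show ?thesis by simp
qed

lemma integrable_lborel_translate_iff:
  fixes f :: "'a::euclidean_space \<Rightarrow> real"
  assumes "f \<in> borel_measurable borel"
  shows "integrable lborel (\<lambda>x. f (c + x)) \<longleftrightarrow> integrable lborel f"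
  using integrable_distr_eq[of "(+) c" lborel borel f] assms lborel_distr_plus[of c] by simp

lemma integral_lborel_translate:
  fixes f :: "'a::euclidean_space \<Rightarrow> real"
  assumes "f \<in> borel_measurable borel"
  shows "(\<integral>x. f (c + x) \<partial>lborel) = (\<integral>x. f x \<partial>lborel)"
  using integral_distr[of "(+) c" lborel borel f] assms lborel_distr_plus[of c] by simp

lemma
  fixes g :: "'a::euclidean_space \<Rightarrow> real"
  assumes [measurable]: "g \<in> borel_measurable borel" "A \<in> sets borel" "B \<in> sets borel"
    and g: "integrable lborel g" "\<And>x. 0 \<le> g x" and AB: "\<And>x. x \<in> A \<Longrightarrow> x + v \<in> B"
  shows integrable_translate_mult_indicator: "integrable lborel (\<lambda>x. g (x + v) * indicator A x)"
    and integral_translate_mult_indicator_le: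
      "(\<integral>x. g (x + v) * indicator A x \<partial>lborel) \<le> (\<integral>x. g x * indicator B x \<partial>lborel)"
proof -
  define f where "f y = g y * indicator A (y - v)" for y
  have [measurable]: "f \<in> borel_measurable borel" unfolding f_def by measurable
  have f_translate: "(\<lambda>x. g (x + v) * indicator A x) = (\<lambda>x. f (v + x))"
    by (simp add: f_def add.commute)
  have "integrable lborel f"
    using g by (intro Bochner_Integration.integrable_bound[OF g(1)]) (auto simp: f_def split: split_indicator)
  then show "integrable lborel (\<lambda>x. g (x + v) * indicator A x)"
    unfolding f_translate by (simp add: integrable_lborel_translate_iff)
  have "(\<integral>x. g (x + v) * indicator A x \<partial>lborel) = (\<integral>x. f x \<partial>lborel)"
    unfolding f_translate by (rule integral_lborel_translate) measurable
  also have "\<dots> \<le> (\<integral>x. g x * indicator B x \<partial>lborel)"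
  proof (rule integral_mono[OF \<open>integrable lborel f\<close>])
    show "integrable lborel (\<lambda>x. g x * indicator B x)"
      using g(1) by (auto intro: integrable_real_mult_indicator)
    show "f x \<le> g x * indicator B x" for x
      using g(2)[of x] AB[of "x - v"] by (auto simp: f_def split: split_indicator)
  qed
  finally show "(\<integral>x. g (x + v) * indicator A x \<partial>lborel) \<le> (\<integral>x. g x * indicator B x \<partial>lborel)" .
qed

lemma sublevel_mass_le:
  fixes g H :: "'a::euclidean_space \<Rightarrow> real"
  assumes sH: "seminorm H" and gm: "g \<in> borel_measurable borel"
    and g: "integrable lborel g" "\<And>x. 0 \<le> g x" and K: "0 \<le> K"
    and doubling: "\<And>x. g x \<le> K * ((g (x + v) + g (x - v)) / 2)"
  shows "(\<integral>x. g x * indicator {x. H x < H v / 2} x \<partial>lborel)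
           \<le> K * (\<integral>x. g x * indicator {x. H v / 2 \<le> H x} x \<partial>lborel)"
proof -
  note [measurable] = gm borel_measurable_seminorm[OF sH]
  define A where "A = {x. H x < H v / 2}"
  define B where "B = {x. H v / 2 \<le> H x}"
  have A_sets: "A \<in> sets borel" and B_sets: "B \<in> sets borel"
    unfolding A_def B_def by measurable
  define IB where "IB = (\<integral>x. g x * indicator B x \<partial>lborel)"
  have to_B: "x + w \<in> B" if "x \<in> A" "H w = H v" for w x
    using seminorm_diff_le[OF sH, of "x + w" x] that by (simp add: A_def B_def)
  have leave_A: "x + v \<in> B" "x - v \<in> B" if "x \<in> A" for x
    using to_B[OF that, of v] to_B[OF that, of "- v"] seminorm_minus[OF sH, of v] by simp_all
  have translate: "integrable lborel (\<lambda>x. g (x + w) * indicator A x)"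
      "(\<integral>x. g (x + w) * indicator A x \<partial>lborel) \<le> IB"
    if "\<And>x. x \<in> A \<Longrightarrow> x + w \<in> B" for w
    unfolding IB_def
    using integrable_translate_mult_indicator[OF gm A_sets B_sets g that]
      integral_translate_mult_indicator_le[OF gm A_sets B_sets g that] by simp_all
  have plus: "integrable lborel (\<lambda>x. g (x + v) * indicator A x)"
      "(\<integral>x. g (x + v) * indicator A x \<partial>lborel) \<le> IB"
    using translate leave_A(1) by blast+
  have minus: "integrable lborel (\<lambda>x. g (x - v) * indicator A x)"
      "(\<integral>x. g (x - v) * indicator A x \<partial>lborel) \<le> IB"
    using translate[of "- v"] leave_A(2) by simp_all
  have iA: "integrable lborel (\<lambda>x. g x * indicator A x)"
    using A_sets g(1) by (auto intro: integrable_real_mult_indicator)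
  have "(\<integral>x. g x * indicator A x \<partial>lborel)
      \<le> (\<integral>x. K * ((g (x + v) * indicator A x + g (x - v) * indicator A x) / 2) \<partial>lborel)"
  proof (rule integral_mono[OF iA])
    show "integrable lborel (\<lambda>x. K * ((g (x + v) * indicator A x + g (x - v) * indicator A x) / 2))"
      using plus(1) minus(1) by simp
    show "g x * indicator A x \<le> K * ((g (x + v) * indicator A x + g (x - v) * indicator A x) / 2)" for x
      using doubling[of x] by (simp split: split_indicator)
  qed
  also have "\<dots> = K * (((\<integral>x. g (x + v) * indicator A x \<partial>lborel)
      + (\<integral>x. g (x - v) * indicator A x \<partial>lborel)) / 2)"
    using plus(1) minus(1) by simp
  also have "\<dots> \<le> K * ((IB + IB) / 2)"
    using plus(2) minus(2) K by (intro mult_left_mono divide_right_mono add_mono) auto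
  finally show ?thesis by (simp add: A_def B_def IB_def)
qed

lemma seminorm_mult_integral_le:
  fixes g H :: "'a::euclidean_space \<Rightarrow> real"
  assumes sH: "seminorm H" and gm: "g \<in> borel_measurable borel"
    and g: "integrable lborel g" "\<And>x. 0 \<le> g x" and Hg: "integrable lborel (\<lambda>x. H x * g x)"
    and K: "0 \<le> K" and doubling: "\<And>x. g x \<le> K * ((g (x + v) + g (x - v)) / 2)"
  shows "H v * (\<integral>x. g x \<partial>lborel) \<le> 2 * (1 + K) * (\<integral>x. H x * g x \<partial>lborel)"
proof -
  note [measurable] = gm borel_measurable_seminorm[OF sH]
  define A where "A = {x. H x < H v / 2}"
  define B where "B = {x. H v / 2 \<le> H x}"
  have [measurable]: "A \<in> sets borel" "B \<in> sets borel" unfolding A_def B_def by measurable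
  define IA where "IA = (\<integral>x. g x * indicator A x \<partial>lborel)"
  define IB where "IB = (\<integral>x. g x * indicator B x \<partial>lborel)"
  have iA: "integrable lborel (\<lambda>x. g x * indicator A x)"
    and iB: "integrable lborel (\<lambda>x. g x * indicator B x)"
    using g(1) by (auto intro: integrable_real_mult_indicator)
  have mass: "IA \<le> K * IB"
    unfolding IA_def IB_def A_def B_def by (rule sublevel_mass_le[OF sH gm g K doubling])
  have "(\<integral>x. g x \<partial>lborel) = (\<integral>x. g x * indicator A x + g x * indicator B x \<partial>lborel)"
    by (intro Bochner_Integration.integral_cong) (auto simp: A_def B_def split: split_indicator)
  then have split: "(\<integral>x. g x \<partial>lborel) = IA + IB"
    using iA iB by (simp add: IA_def IB_def)
  have "H v / 2 * IB = (\<integral>x. H v / 2 * (g x * indicator B x) \<partial>lborel)"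
    by (simp add: IB_def)
  also have "\<dots> \<le> (\<integral>x. H x * g x \<partial>lborel)"
  proof (intro integral_mono)
    fix x
    show "H v / 2 * (g x * indicator B x) \<le> H x * g x"
    proof (cases "x \<in> B")
      case True
      then have "H v / 2 * g x \<le> H x * g x" using g(2)[of x] by (intro mult_right_mono) (simp_all add: B_def)
      then show ?thesis using True by simp
    qed (use g(2)[of x] seminorm_nonneg[OF sH, of x] in simp)
  qed (use iB Hg in simp_all)
  finally have markov: "H v / 2 * IB \<le> (\<integral>x. H x * g x \<partial>lborel)" .
  have "H v * (\<integral>x. g x \<partial>lborel) \<le> H v * ((1 + K) * IB)"
    using split mass seminorm_nonneg[OF sH, of v] by (intro mult_left_mono) (auto simp: algebra_simps)
  also have "\<dots> = 2 * (1 + K) * (H v / 2 * IB)" by simp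
  also have "\<dots> \<le> 2 * (1 + K) * (\<integral>x. H x * g x \<partial>lborel)"
    using markov K by (intro mult_left_mono) auto
  finally show ?thesis .
qed

lemma uniformly_smooth_seminorm_bound:
  fixes M H :: "'a::euclidean_space \<Rightarrow> real"
  assumes sM: "seminorm M" and definite: "\<And>x. M x = 0 \<Longrightarrow> x = 0" and sH: "seminorm H"
    and q: "1 \<le> q" and S: "0 < S" and smooth: "uniformly_smooth q S M" and y: "M y \<le> 1"
  shows "H y \<le> 2 * (1 + exp 1) * S *
    ((\<integral>x. H x * exp (- (M x powr q)) \<partial>lborel) / (\<integral>x. exp (- (M x powr q)) \<partial>lborel))"
proof -
  note [measurable] = borel_measurable_seminorm[OF sM]
  define g where "g x = exp (- (M x powr q))" for x
  define v where "v = (1 / S) *\<^sub>R y"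
  have doubling: "g x \<le> exp 1 * ((g (x + v) + g (x - v)) / 2)" for x
  proof -
    have "M (S *\<^sub>R v) powr q \<le> 1"
      using S y q seminorm_nonneg[OF sM, of y] by (simp add: v_def powr_le1)
    moreover have "(M (x + v) powr q + M (x - v) powr q) / 2 \<le> M x powr q + M (S *\<^sub>R v) powr q"
      using smooth unfolding uniformly_smooth_def by blast
    ultimately have "(M (x + v) powr q + M (x - v) powr q) / 2 \<le> M x powr q + 1" by linarith
    then show ?thesis unfolding g_def by (rule exp_neg_le_midpoint)
  qed
  have gm: "g \<in> borel_measurable borel" unfolding g_def[abs_def] by measurable
  have gi: "integrable lborel g"
    unfolding g_def[abs_def] by (rule integrable_exp_neg_seminorm_powr[OF sM definite sH q])
  have Hg: "integrable lborel (\<lambda>x. H x * g x)"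
    unfolding g_def by (rule integrable_seminorm_mult_exp_neg_seminorm_powr[OF sM definite sH q])
  have Z: "0 < (\<integral>x. g x \<partial>lborel)" by (rule integral_pos_lborel[OF gi]) (simp add: g_def)
  have "H v * (\<integral>x. g x \<partial>lborel) \<le> 2 * (1 + exp 1) * (\<integral>x. H x * g x \<partial>lborel)"
    by (rule seminorm_mult_integral_le[OF sH gm gi _ Hg _ doubling]) (simp_all add: g_def)
  moreover have "H v = H y / S" using S by (simp add: v_def seminorm_scaleR[OF sH])
  ultimately have "H y * (\<integral>x. g x \<partial>lborel) \<le> 2 * (1 + exp 1) * S * (\<integral>x. H x * g x \<partial>lborel)"
    using S by (simp add: field_simps)
  with Z show ?thesis by (simp add: g_def pos_le_divide_eq)
qed

lemma seminorm_comp_definite: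
  assumes "linear L" "inj L" "range L \<subseteq> orth_comp (ker_sn N)" "N (L y) = 0"
  shows "y = 0"
proof -
  have "L y \<in> ker_sn N \<inter> orth_comp (ker_sn N)" using assms(3,4) by (auto simp: ker_sn_def)
  then have "L y = 0" by (auto simp: orth_comp_def)
  then show ?thesis using assms(1,2) by (metis inj_eq linear_0)
qed

lemma orth_comp_ker_representative:
  fixes N Nhat :: "'a::euclidean_space \<Rightarrow> real"
  assumes sN: "seminorm N" and sNhat: "seminorm Nhat" and ker: "ker_sn N \<subseteq> ker_sn Nhat"
    and L: "range L = orth_comp (ker_sn N)"
  obtains y where "N (L y) = N x" "Nhat (L y) = Nhat x"
proof -
  obtain x0 z where x0: "x0 \<in> span (ker_sn N)" and z: "\<And>w. w \<in> span (ker_sn N) \<Longrightarrow> orthogonal z w"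
    and x: "x = x0 + z"
    by (rule orthogonal_subspace_decomp_exists[of "ker_sn N" x]) blast
  have "x0 \<in> ker_sn N" using x0 span_eq_iff[of "ker_sn N"] subspace_ker_sn[OF sN] by blast
  then have x0_ker: "N x0 = 0" "Nhat x0 = 0" using ker by (auto simp: ker_sn_def)
  have "z \<in> range L" using z L by (auto simp: orth_comp_def orthogonal_def intro: span_base)
  then obtain y where "z = L y" by blast
  with x have "x = L y + x0" by (simp add: add.commute)
  then have "N (L y) = N x" "Nhat (L y) = Nhat x"
    using seminorm_add_ker[OF sN x0_ker(1)] seminorm_add_ker[OF sNhat x0_ker(2)] by simp_all
  then show thesis by (rule that)
qed

lemma integral_exp_density_measure:
  fixes L :: "'m::euclidean_space \<Rightarrow> 'n::euclidean_space" and f N :: "'n \<Rightarrow> real"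
  assumes "linear L" and [measurable]: "N \<in> borel_measurable borel" "f \<in> borel_measurable borel"
  shows "(\<integral>x. f x \<partial>exp_density_measure L q N)
    = (\<integral>y. f (L y) * exp (- (N (L y) powr q)) \<partial>lborel) / (\<integral>y. exp (- (N (L y) powr q)) \<partial>lborel)"
proof -
  have "L \<in> borel_measurable borel"
    using assms(1) by (intro borel_measurable_continuous_onI linear_continuous_on)
      (simp add: linear_conv_bounded_linear)
  then have [measurable]: "L \<in> measurable lborel borel" by simp
  define Z where "Z = (\<integral>y. exp (- (N (L y) powr q)) \<partial>lborel)"
  have Z_eq: "(\<integral>x. exp (- (N x powr q)) \<partial>subspace_leb L) = Z"
    unfolding subspace_leb_def Z_def by (subst integral_distr) auto
  have "0 \<le> Z" unfolding Z_def by (intro integral_nonneg_AE AE_I2) simp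
  have "(\<integral>x. f x \<partial>exp_density_measure L q N)
      = (\<integral>x. (exp (- (N x powr q)) / Z) *\<^sub>R f x \<partial>subspace_leb L)"
    unfolding exp_density_measure_def Let_def Z_eq
    by (rule integral_density[where g="\<lambda>x. exp (- (N x powr q)) / Z"])
       (auto simp: subspace_leb_def \<open>0 \<le> Z\<close>)
  also have "\<dots> = (\<integral>y. (exp (- (N (L y) powr q)) / Z) *\<^sub>R f (L y) \<partial>lborel)"
    unfolding subspace_leb_def by (subst integral_distr) auto
  also have "\<dots> = (\<integral>y. f (L y) * exp (- (N (L y) powr q)) / Z \<partial>lborel)"
    by (simp add: mult.commute)
  finally show ?thesis by (simp add: Z_def)
qed

theorem lemma3p4:
  fixes p S :: real
    and N Nhat :: "real ^ 'n \<Rightarrow> real"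
    and L :: "real ^ 'm \<Rightarrow> real ^ 'n"
  assumes "p \<ge> 1"
    and "S > 0"
    and "seminorm N"
    and "uniformly_smooth (min p 2) S N"
    and "linear L" and "inj L" and "range L = orth_comp (ker_sn N)"
    and "seminorm Nhat"
    and "ker_sn N \<subseteq> ker_sn Nhat"
  shows "(SUP x\<in>unit_ball_sn N. Nhat x)
           \<le> 12 * S * (\<integral>x. Nhat x \<partial>(exp_density_measure L (min p 2) N))"
proof -
  define q where "q = min p 2"
  have q: "1 \<le> q" using assms(1) by (simp add: q_def)
  let ?ratio = "(\<integral>y. Nhat (L y) * exp (- (N (L y) powr q)) \<partial>lborel)
    / (\<integral>y. exp (- (N (L y) powr q)) \<partial>lborel)"
  have definite: "N (L y) = 0 \<Longrightarrow> y = 0" for y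
    using seminorm_comp_definite[OF assms(5,6), of N y] assms(7) by simp
  note bound = uniformly_smooth_seminorm_bound[OF seminorm_comp_linear[OF assms(3,5)] definite
      seminorm_comp_linear[OF assms(8,5)] q assms(2)
      uniformly_smooth_comp_linear[OF assms(4)[folded q_def] assms(5)]]
  have "Nhat x \<le> 2 * (1 + exp 1) * S * ?ratio" if "x \<in> unit_ball_sn N" for x
  proof -
    obtain y where "N (L y) = N x" "Nhat (L y) = Nhat x"
      using orth_comp_ker_representative[OF assms(3,8,9,7)] by blast
    then show ?thesis using that bound[of y] by (simp add: unit_ball_sn_def)
  qed
  moreover have "0 \<in> unit_ball_sn N"
    using seminorm_zero[OF assms(3)] by (simp add: unit_ball_sn_def)
  ultimately have "(SUP x\<in>unit_ball_sn N. Nhat x) \<le> 2 * (1 + exp 1) * S * ?ratio"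
    by (intro cSUP_least) auto
  also have "\<dots> \<le> 12 * S * ?ratio"
    using exp_le assms(2) seminorm_nonneg[OF assms(8)]
    by (intro mult_right_mono divide_nonneg_nonneg integral_nonneg_AE AE_I2) auto
  also have "?ratio = (\<integral>x. Nhat x \<partial>exp_density_measure L q N)"
    using assms(5) borel_measurable_seminorm[OF assms(3)] borel_measurable_seminorm[OF assms(8)]
    by (rule integral_exp_density_measure[symmetric])
  finally show ?thesis unfolding q_def .
qed

end
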